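(* Let $\lambda,\mu\in\mathbb{C}$ be nonzero. For each integer $L\geq 2$ with $N=L^2$ and each $J\in\mathbb{C}$, let $$V_{N,J}(q)=\sum_{i\in\Lambda_L}\Biggl[\frac{\lambda}{4!}q_i^4-\frac{\mu^2}{2}q_i^2+\frac{J}{4}\sum_{j\in\mathcal{N}(i)}(q_i-q_j)^2\Biggr],\qquad q\in\mathbb{C}^N,$$ and let $\mathcal{S}(N,\lambda,\mu^2)$ be the set of $J\in\mathbb{C}$ for which there exists $q\in\mathbb{C}^N$ with $\frac{\partial V_{N,J}}{\partial q_i}(q)=0$ for all $i$ and $\det\bigl(\frac{\partial^2 V_{N,J}(q)}{\partial q_i\partial q_j}\bigr)_{i,j}=0$. Then the set $$\mathcal{T}(\lambda,\mu^2)=\bigcup_{N\geq 2}\mathcal{S}(N,\lambda,\mu^2),$$ the union over all such lattice sizes $N=L^2\geq 2$, is a countable subset of $\mathbb{C}$.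
   Context: $\Lambda_L$ is the square lattice $(\mathbb{Z}/L\mathbb{Z})^2$ with periodic boundary conditions, whose $N=L^2$ sites are labelled $1,\dots,N$; $q_i$ is the variable at site $i$, and $\mathcal{N}(i)$ denotes the four nearest-neighbouring sites of $i$ (counted with multiplicity if they coincide). $V_{N,J}$ is the potential energy of the two-dimensional nearest-neighbour $\phi^4$ model with coupling $J$, extended to complex $q$ and $J$. *)

theory Defs
  imports "HOL-Analysis.Analysis" "Jordan_Normal_Form.Determinant"
begin

text \<open>Sites of the periodic L x L lattice are labelled k = 0..L^2-1, with
  k corresponding to the lattice point (k div L, k mod L). A configuration is
  q :: nat => complex (only values at sites k < L^2 are relevant).\<close>

definition nbrs :: "nat \<Rightarrow> nat \<Rightarrow> nat list" where
  "nbrs L k = (let r = k div L; c = k mod L in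
     [((r + 1) mod L) * L + c, ((r + L - 1) mod L) * L + c,
      r * L + (c + 1) mod L, r * L + (c + L - 1) mod L])"

definition V :: "nat \<Rightarrow> complex \<Rightarrow> complex \<Rightarrow> complex \<Rightarrow> (nat \<Rightarrow> complex) \<Rightarrow> complex" where
  "V L J lam mu q = (\<Sum>i<L^2. lam / 24 * q i ^ 4 - mu^2 / 2 * q i ^ 2
      + J / 4 * sum_list (map (\<lambda>j. (q i - q j)^2) (nbrs L i)))"

definition pderiv_at :: "((nat \<Rightarrow> complex) \<Rightarrow> complex) \<Rightarrow> nat \<Rightarrow> (nat \<Rightarrow> complex) \<Rightarrow> complex" where
  "pderiv_at F i q = deriv (\<lambda>t. F (q(i := t))) (q i)"

definition S :: "nat \<Rightarrow> complex \<Rightarrow> complex \<Rightarrow> complex set" where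
  "S L lam mu = {J. \<exists>q. (\<forall>i<L^2. pderiv_at (V L J lam mu) i q = 0) \<and>
      det (mat (L^2) (L^2) (\<lambda>(i, j). pderiv_at (pderiv_at (V L J lam mu) j) i q)) = 0}"

end

theory Submission imports Defs begin

text \<open>On the critical set of \<open>V\<^sub>N\<^sub>,\<^sub>J\<close> the gradient equations read
  \<open>q\<^sub>i\<^sup>3 = (6\<mu>\<^sup>2/\<lambda>) q\<^sub>i - (6J/\<lambda>) (linear form in q)\<close>, so every monomial can be reduced,
  with coefficients polynomial in \<open>J\<close>, to the finitely many monomials of degree at most 2
  in each variable. Multiplication by the Hessian determinant is therefore represented on
  these reduced monomials by a square matrix \<open>M(J)\<close> with polynomial entries. If \<open>J\<close> admits
  a degenerate critical point, evaluating the reduced monomials there gives a nonzero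
  kernel vector of \<open>M(J)\<close>, so \<open>det M(J) = 0\<close>. At \<open>J = 0\<close> the \<open>3\<^sup>N\<close> points of
  \<open>{0, \<plusminus>r}\<^sup>N\<close>, \<open>r\<^sup>2 = 6\<mu>\<^sup>2/\<lambda>\<close>, are nondegenerate critical points which separate the
  reduced monomials, so \<open>det M(0) \<noteq> 0\<close>. Hence each \<open>S(N,\<lambda>,\<mu>\<^sup>2)\<close> lies in the finite zero
  set of a nonzero polynomial, and the countable union is countable.\<close>

section \<open>Determinants of multiplication matrices\<close>

lemma det_reindexed_eq_0:
  fixes A :: "'b \<Rightarrow> 'b \<Rightarrow> 'a::idom"
  assumes e: "bij_betw e {0..<K} B"
    and kernel: "\<And>a. a \<in> B \<Longrightarrow> (\<Sum>b\<in>B. A a b * x b) = 0"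
    and "b1 \<in> B" and "x b1 \<noteq> 0"
  shows "det (mat K K (\<lambda>(r, s). A (e r) (e s))) = 0"
proof -
  define M where "M = mat K K (\<lambda>(r, s). A (e r) (e s))"
  define w where "w = vec K (\<lambda>s. x (e s))"
  obtain s1 where s1: "s1 < K" "e s1 = b1"
    using e \<open>b1 \<in> B\<close> unfolding bij_betw_def by auto
  have "w \<noteq> 0\<^sub>v K"
    using s1 \<open>x b1 \<noteq> 0\<close> unfolding w_def by (metis index_vec index_zero_vec(1))
  moreover have "M *\<^sub>v w = 0\<^sub>v K"
  proof (rule eq_vecI)
    fix r assume "r < dim_vec (0\<^sub>v K)"
    then have r: "r < K" by simp
    then have "e r \<in> B" using e by (auto dest: bij_betwE)
    have "(M *\<^sub>v w) $ r = (\<Sum>s\<in>{0..<K}. A (e r) (e s) * x (e s))"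
      using r unfolding M_def w_def by (simp add: scalar_prod_def)
    also have "\<dots> = 0"
      using kernel[OF \<open>e r \<in> B\<close>] sum.reindex_bij_betw[OF e, of "\<lambda>b. A (e r) b * x b"]
      by simp
    finally show "(M *\<^sub>v w) $ r = 0\<^sub>v K $ r" using r by simp
  qed (simp add: M_def)
  moreover have "w \<in> carrier_vec K" "M \<in> carrier_mat K K" by (simp_all add: w_def M_def)
  ultimately show ?thesis using det_0_iff_vec_prod_zero unfolding M_def by blast
qed

text \<open>A left kernel vector of \<open>A\<close> is orthogonal to every eigenvector \<open>(x z b)\<^sub>b\<close> with
  nonzero eigenvalue \<open>d z\<close>; if these eigenvectors separate, it must vanish.\<close>

lemma det_reindexed_neq_0:
  fixes A :: "'b \<Rightarrow> 'b \<Rightarrow> 'a::field"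
  assumes e: "bij_betw e {0..<K} B"
    and eigen: "\<And>z a. z \<in> G \<Longrightarrow> a \<in> B \<Longrightarrow> d z * x z a = (\<Sum>b\<in>B. A a b * x z b)"
    and nonzero: "\<And>z. z \<in> G \<Longrightarrow> d z \<noteq> 0"
    and separating: "\<And>u. (\<And>z. z \<in> G \<Longrightarrow> (\<Sum>a\<in>B. u a * x z a) = 0) \<Longrightarrow> \<forall>a\<in>B. u a = 0"
  shows "det (mat K K (\<lambda>(r, s). A (e r) (e s))) \<noteq> 0"
proof
  define M where "M = mat K K (\<lambda>(r, s). A (e r) (e s))"
  have M: "M \<in> carrier_mat K K" by (simp add: M_def)
  assume "det (mat K K (\<lambda>(r, s). A (e r) (e s))) = 0"
  then have "det (transpose_mat M) = 0" using det_transpose[OF M] by (simp add: M_def)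
  then obtain v where v: "v \<in> carrier_vec K" "v \<noteq> 0\<^sub>v K" "transpose_mat M *\<^sub>v v = 0\<^sub>v K"
    using det_0_iff_vec_prod_zero[of "transpose_mat M" K] M by auto
  define u where "u a = v $ inv_into {0..<K} e a" for a
  have u_e: "u (e r) = v $ r" if "r < K" for r
    unfolding u_def using bij_betw_inv_into_left[OF e] that by simp
  have left_kernel: "(\<Sum>a\<in>B. u a * A a b) = 0" if "b \<in> B" for b
  proof -
    obtain s where s: "s < K" "e s = b" using e \<open>b \<in> B\<close> unfolding bij_betw_def by auto
    have "(transpose_mat M *\<^sub>v v) $ s = 0" using v(3) s by simp
    then have "(\<Sum>r\<in>{0..<K}. A (e r) (e s) * v $ r) = 0"
      using s v(1) unfolding M_def by (simp add: scalar_prod_def)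
    then show ?thesis
      using s sum.reindex_bij_betw[OF e, of "\<lambda>a. u a * A a b"] by (simp add: u_e mult.commute)
  qed
  have "\<forall>a\<in>B. u a = 0"
  proof (rule separating)
    fix z assume "z \<in> G"
    have "d z * (\<Sum>a\<in>B. u a * x z a) = (\<Sum>a\<in>B. u a * (d z * x z a))"
      by (simp add: sum_distrib_left mult_ac)
    also have "\<dots> = (\<Sum>a\<in>B. u a * (\<Sum>b\<in>B. A a b * x z b))"
      by (intro sum.cong refl) (simp add: eigen \<open>z \<in> G\<close>)
    also have "\<dots> = (\<Sum>a\<in>B. \<Sum>b\<in>B. u a * A a b * x z b)"
      by (simp add: sum_distrib_left mult.assoc)
    also have "\<dots> = (\<Sum>b\<in>B. \<Sum>a\<in>B. u a * A a b * x z b)"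
      by (rule sum.swap)
    also have "\<dots> = (\<Sum>b\<in>B. x z b * (\<Sum>a\<in>B. u a * A a b))"
      by (simp add: sum_distrib_left mult_ac)
    also have "\<dots> = 0" by (simp add: left_kernel)
    finally show "(\<Sum>a\<in>B. u a * x z a) = 0" using nonzero[OF \<open>z \<in> G\<close>] by simp
  qed
  then have "u (e r) = 0" if "r < K" for r
    using e that by (auto dest: bij_betwE)
  then have "v = 0\<^sub>v K" using u_e v(1) by (intro eq_vecI) auto
  with v(2) show False ..
qed

lemma comm_ring_hom_poly: "comm_ring_hom (\<lambda>p. poly p x)"
  by unfold_locales auto

lemma finite_params_of_multiplication_matrix:
  fixes m :: "'b \<Rightarrow> 'q \<Rightarrow> complex" and C :: "'b \<Rightarrow> 'b \<Rightarrow> complex poly"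
  assumes "finite B"
    and mult: "\<And>a q J. a \<in> B \<Longrightarrow> crit q J \<Longrightarrow> D q J * m a q = (\<Sum>b\<in>B. poly (C a b) J * m b q)"
    and unit: "b' \<in> B" "\<And>q. m b' q = 1"
    and regular: "\<And>z. z \<in> G \<Longrightarrow> crit z J' \<and> D z J' \<noteq> 0"
    and separating: "\<And>u. (\<And>z. z \<in> G \<Longrightarrow> (\<Sum>a\<in>B. u a * m a z) = 0) \<Longrightarrow> \<forall>a\<in>B. u a = 0"
  shows "finite {J. \<exists>q. crit q J \<and> D q J = 0}"
proof -
  obtain e where e: "bij_betw e {0..<card B} B"
    using ex_bij_betw_nat_finite[OF \<open>finite B\<close>] by blast
  define P where "P = det (mat (card B) (card B) (\<lambda>(r, s). C (e r) (e s)))"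
  have eval_P: "poly P J = det (mat (card B) (card B) (\<lambda>(r, s). poly (C (e r) (e s)) J))" for J
    unfolding P_def comm_ring_hom.hom_det[OF comm_ring_hom_poly, symmetric]
    by (intro arg_cong[where f = det]) auto
  have "poly P J' \<noteq> 0"
    unfolding eval_P
  proof (rule det_reindexed_neq_0[OF e, where A = "\<lambda>a b. poly (C a b) J'"
        and d = "\<lambda>z. D z J'" and x = "\<lambda>z b. m b z" and G = G])
    show "D z J' * m a z = (\<Sum>b\<in>B. poly (C a b) J' * m b z)" if "z \<in> G" "a \<in> B" for z a
      using mult[OF that(2)] regular[OF that(1)] by blast
    show "D z J' \<noteq> 0" if "z \<in> G" for z
      using regular[OF that] by blast
  qed (fact separating)
  then have "finite {J. poly P J = 0}" by (intro poly_roots_finite) auto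
  moreover have "{J. \<exists>q. crit q J \<and> D q J = 0} \<subseteq> {J. poly P J = 0}"
  proof safe
    fix q J assume "crit q J" "D q J = 0"
    show "poly P J = 0"
      unfolding eval_P
    proof (rule det_reindexed_eq_0[OF e, where A = "\<lambda>a b. poly (C a b) J" and x = "\<lambda>b. m b q"])
      show "(\<Sum>b\<in>B. poly (C a b) J * m b q) = 0" if "a \<in> B" for a
        using mult[OF that \<open>crit q J\<close>] \<open>D q J = 0\<close> by simp
    qed (use unit in auto)
  qed
  ultimately show ?thesis by (rule finite_subset[rotated])
qed

section \<open>Reduced monomials and their separation by a grid\<close>

definition mon_eval :: "nat \<Rightarrow> (nat \<Rightarrow> nat) \<Rightarrow> (nat \<Rightarrow> complex) \<Rightarrow> complex" where
  "mon_eval N a q = (\<Prod>i<N. q i ^ a i)"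

definition exps :: "nat \<Rightarrow> (nat \<Rightarrow> nat) set" where
  "exps N = {a. \<forall>i\<ge>N. a i = 0}"

definition reduced_exps :: "nat \<Rightarrow> (nat \<Rightarrow> nat) set" where
  "reduced_exps N = {a \<in> exps N. \<forall>i. a i \<le> 2}"

lemma finite_reduced_exps: "finite (reduced_exps N)"
proof -
  have "reduced_exps N \<subseteq> (\<lambda>f i. if i < N then f i else 0) ` ({..<N} \<rightarrow>\<^sub>E {..2})"
  proof
    fix a assume a: "a \<in> reduced_exps N"
    then have "a = (\<lambda>i. if i < N then restrict a {..<N} i else 0)"
      by (auto simp: reduced_exps_def exps_def)
    moreover have "restrict a {..<N} \<in> {..<N} \<rightarrow>\<^sub>E {..2}"
      using a by (auto simp: reduced_exps_def)
    ultimately show "a \<in> (\<lambda>f i. if i < N then f i else 0) ` ({..<N} \<rightarrow>\<^sub>E {..2})" by blast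
  qed
  then show ?thesis by (rule finite_subset) (intro finite_imageI finite_PiE, auto)
qed

lemma zero_in_reduced_exps: "(\<lambda>_. 0) \<in> reduced_exps N"
  by (simp add: reduced_exps_def exps_def)

lemma mon_eval_zero_exp [simp]: "mon_eval N (\<lambda>_. 0) q = 1"
  by (simp add: mon_eval_def)

lemma mon_eval_add_exp:
  assumes "i < N"
  shows "mon_eval N (a(i := a i + k)) q = mon_eval N a q * q i ^ k"
proof -
  let ?R = "\<Prod>j\<in>{..<N}-{i}. q j ^ a j"
  have "(\<Prod>j\<in>{..<N}-{i}. q j ^ (a(i := a i + k)) j) = ?R"
    by (rule prod.cong) auto
  then have "mon_eval N (a(i := a i + k)) q = q i ^ (a i + k) * ?R"
    unfolding mon_eval_def using assms by (subst prod.remove[of _ i]) auto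
  moreover have "mon_eval N a q = q i ^ a i * ?R"
    unfolding mon_eval_def using assms by (subst prod.remove[of _ i]) auto
  ultimately show ?thesis by (simp add: power_add mult_ac)
qed

lemma mon_eval_Suc_exp:
  assumes "i < N"
  shows "mon_eval N (a(i := Suc (a i))) q = mon_eval N a q * q i"
  using mon_eval_add_exp[OF assms, of a 1] by simp

lemma sum_exp_upd:
  assumes "i < (N::nat)"
  shows "(\<Sum>k<N. (a(i := x)) k) + a i = (\<Sum>k<N. a k) + (x::nat)"
proof -
  have "(\<Sum>k\<in>{..<N}-{i}. (a(i := x)) k) = (\<Sum>k\<in>{..<N}-{i}. a k)"
    by (rule sum.cong) auto
  then have "(\<Sum>k<N. (a(i := x)) k) = x + (\<Sum>k\<in>{..<N}-{i}. a k)"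
    using assms by (subst sum.remove[of _ i]) auto
  moreover have "(\<Sum>k<N. a k) = a i + (\<Sum>k\<in>{..<N}-{i}. a k)"
    using assms by (subst sum.remove[of _ i]) auto
  ultimately show ?thesis by simp
qed

text \<open>\<open>lagrange3 r k\<close> gives the weights at the nodes \<open>0, r, -r\<close> of the functional dual
  to \<open>t\<^sup>k\<close> in the basis \<open>1, t, t\<^sup>2\<close>; tensoring these separates the reduced monomials.\<close>

definition lagrange3 :: "complex \<Rightarrow> nat \<Rightarrow> complex \<Rightarrow> complex" where
  "lagrange3 r k t = (if k = 0 then (if t = 0 then 1 else 0)
     else if k = 1 then (if t = 0 then 0 else if t = r then 1/(2*r) else -1/(2*r))
     else (if t = 0 then -1/r^2 else 1/(2*r^2)))"

lemma sum_lagrange3: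
  assumes r: "r \<noteq> 0" and "k \<le> 2" and "m \<le> 2"
  shows "(\<Sum>t\<in>{0, r, -r}. lagrange3 r k t * t ^ m) = (if k = m then 1 else 0)"
proof -
  have "-r \<noteq> r"
  proof
    assume "-r = r"
    then have "r + r = 0" by (metis add.right_inverse)
    then have "2 * r = 0" by simp
    then show False using r by simp
  qed
  then have distinct: "-r \<noteq> r" "-r \<noteq> 0" "r \<noteq> -r" "0 \<noteq> -r" "0 \<noteq> r"
    using r by auto
  have "k = 0 \<or> k = 1 \<or> k = 2" "m = 0 \<or> m = 1 \<or> m = 2" using assms by auto
  then show ?thesis
    using r distinct by (elim disjE; simp add: lagrange3_def field_simps)
qed

lemma prod_sum_lagrange3:
  assumes "r \<noteq> 0" and b: "b \<in> reduced_exps N" and b0: "b0 \<in> reduced_exps N"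
  shows "(\<Prod>i<N. \<Sum>t\<in>{0, r, -r}. lagrange3 r (b0 i) t * t ^ b i) = (if b = b0 then 1 else 0)"
proof -
  have "(\<Prod>i<N. \<Sum>t\<in>{0, r, -r}. lagrange3 r (b0 i) t * t ^ b i)
      = (\<Prod>i<N. if b0 i = b i then 1 else 0)"
    using b b0 by (intro prod.cong refl sum_lagrange3 \<open>r \<noteq> 0\<close>) (auto simp: reduced_exps_def)
  also have "\<dots> = (if b = b0 then 1 else 0)"
  proof (cases "b = b0")
    case False
    then obtain i where "b i \<noteq> b0 i" by auto
    moreover from this have "i < N"
      using b b0 by (cases "i < N") (auto simp: reduced_exps_def exps_def)
    ultimately show ?thesis using False by auto
  qed simp
  finally show ?thesis .
qed

lemma reduced_mons_separated_by_grid: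
  assumes "r \<noteq> 0"
    and vanish: "\<And>z. z \<in> {..<N} \<rightarrow>\<^sub>E {0, r, -r} \<Longrightarrow> (\<Sum>b\<in>reduced_exps N. u b * mon_eval N b z) = 0"
  shows "\<forall>b0\<in>reduced_exps N. u b0 = 0"
proof
  fix b0 assume b0: "b0 \<in> reduced_exps N"
  let ?G = "{..<N} \<rightarrow>\<^sub>E {0, r, -r}"
  have "0 = (\<Sum>z\<in>?G. (\<Prod>i<N. lagrange3 r (b0 i) (z i)) * (\<Sum>b\<in>reduced_exps N. u b * mon_eval N b z))"
    using vanish by simp
  also have "\<dots> = (\<Sum>b\<in>reduced_exps N. u b * (\<Sum>z\<in>?G. \<Prod>i<N. lagrange3 r (b0 i) (z i) * z i ^ b i))"
    unfolding sum_distrib_left mon_eval_def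
    by (subst sum.swap, intro sum.cong refl) (simp add: prod.distrib mult_ac)
  also have "\<dots> = (\<Sum>b\<in>reduced_exps N. u b * (\<Prod>i<N. \<Sum>t\<in>{0, r, -r}. lagrange3 r (b0 i) t * t ^ b i))"
    by (simp add: prod_sum_PiE)
  also have "\<dots> = (\<Sum>b\<in>reduced_exps N. if b = b0 then u b0 else 0)"
    by (intro sum.cong refl) (simp add: prod_sum_lagrange3[OF \<open>r \<noteq> 0\<close> _ b0])
  also have "\<dots> = u b0"
    using b0 finite_reduced_exps by simp
  finally show "u b0 = 0" by simp
qed

section \<open>Reduction modulo cubic relations\<close>

locale cubic_relations =
  fixes N :: nat and crit :: "(nat \<Rightarrow> complex) \<Rightarrow> complex \<Rightarrow> bool"
    and p :: "nat \<Rightarrow> nat \<Rightarrow> complex poly"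
  assumes cube_eq: "crit q J \<Longrightarrow> i < N \<Longrightarrow> q i ^ 3 = (\<Sum>j<N. poly (p i j) J * q j)"
begin

definition in_span :: "((nat \<Rightarrow> complex) \<Rightarrow> complex \<Rightarrow> complex) \<Rightarrow> bool" where
  "in_span f \<longleftrightarrow>
    (\<exists>c. \<forall>q J. crit q J \<longrightarrow> f q J = (\<Sum>b\<in>reduced_exps N. poly (c b) J * mon_eval N b q))"

definition multiplier :: "((nat \<Rightarrow> complex) \<Rightarrow> complex \<Rightarrow> complex) \<Rightarrow> bool" where
  "multiplier f \<longleftrightarrow> (\<forall>a\<in>exps N. in_span (\<lambda>q J. f q J * mon_eval N a q))"

lemma in_span_cong:
  assumes "in_span g" and eq: "\<And>q J. crit q J \<Longrightarrow> f q J = g q J"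
  shows "in_span f"
proof -
  obtain c where "\<forall>q J. crit q J \<longrightarrow> g q J = (\<Sum>b\<in>reduced_exps N. poly (c b) J * mon_eval N b q)"
    using assms(1) unfolding in_span_def by blast
  then show ?thesis unfolding in_span_def by (intro exI[of _ c]) (simp add: eq)
qed

lemma in_span_add:
  assumes "in_span f" "in_span g"
  shows "in_span (\<lambda>q J. f q J + g q J)"
proof -
  obtain c d where
    c: "\<forall>q J. crit q J \<longrightarrow> f q J = (\<Sum>b\<in>reduced_exps N. poly (c b) J * mon_eval N b q)" and
    d: "\<forall>q J. crit q J \<longrightarrow> g q J = (\<Sum>b\<in>reduced_exps N. poly (d b) J * mon_eval N b q)"
    using assms unfolding in_span_def by blast
  show ?thesis unfolding in_span_def
    by (rule exI[of _ "\<lambda>b. c b + d b"]) (simp add: c d sum.distrib algebra_simps)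
qed

lemma in_span_scale: "in_span f \<Longrightarrow> in_span (\<lambda>q J. poly c J * f q J)"
proof -
  assume "in_span f"
  then obtain d where d: "\<forall>q J. crit q J \<longrightarrow> f q J = (\<Sum>b\<in>reduced_exps N. poly (d b) J * mon_eval N b q)"
    unfolding in_span_def by blast
  show ?thesis unfolding in_span_def
    by (rule exI[of _ "\<lambda>b. c * d b"]) (simp add: d sum_distrib_left mult_ac)
qed

lemma in_span_sum:
  "finite A \<Longrightarrow> (\<And>x. x \<in> A \<Longrightarrow> in_span (f x)) \<Longrightarrow> in_span (\<lambda>q J. \<Sum>x\<in>A. f x q J)"
proof (induction A rule: finite_induct)
  case empty
  show ?case unfolding in_span_def by (rule exI[of _ "\<lambda>_. 0"]) simp
next
  case (insert a A)
  then have "in_span (\<lambda>q J. f a q J + (\<Sum>x\<in>A. f x q J))" by (intro in_span_add) auto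
  with insert.hyps show ?case by simp
qed

lemma in_span_reduced_mon:
  assumes "a \<in> reduced_exps N"
  shows "in_span (\<lambda>q J. mon_eval N a q)"
  unfolding in_span_def
proof (rule exI[of _ "\<lambda>b. if b = a then 1 else 0"], intro allI impI)
  fix q J
  have "(\<Sum>b\<in>reduced_exps N. poly (if b = a then 1 else 0) J * mon_eval N b q)
      = (\<Sum>b\<in>reduced_exps N. if b = a then mon_eval N a q else 0)"
    by (intro sum.cong) auto
  then show "mon_eval N a q = (\<Sum>b\<in>reduced_exps N. poly (if b = a then 1 else 0) J * mon_eval N b q)"
    using assms finite_reduced_exps by simp
qed

text \<open>Induction on the total degree: an exponent \<open>\<ge> 3\<close> is lowered by \<open>cube_eq\<close>,
  which trades \<open>q\<^sub>i\<^sup>3\<close> for terms of degree one.\<close>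

lemma in_span_mon: "a \<in> exps N \<Longrightarrow> in_span (\<lambda>q J. mon_eval N a q)"
proof (induction "\<Sum>k<N. a k" arbitrary: a rule: less_induct)
  case less
  show ?case
  proof (cases "\<forall>i<N. a i \<le> 2")
    case True
    have "a i \<le> 2" for i using True less.prems by (cases "i < N") (auto simp: exps_def)
    with less.prems have "a \<in> reduced_exps N" by (simp add: reduced_exps_def)
    then show ?thesis by (rule in_span_reduced_mon)
  next
    case False
    then obtain i where i: "i < N" "3 \<le> a i" by auto
    define a' where "a' = a(i := a i - 3)"
    have a: "a = a'(i := a' i + 3)" using i(2) by (auto simp: a'_def)
    have deg: "(\<Sum>k<N. a' k) + a i = (\<Sum>k<N. a k) + (a i - 3)"
      unfolding a'_def using i(1) by (rule sum_exp_upd)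
    have lower: "in_span (\<lambda>q J. mon_eval N (a'(j := Suc (a' j))) q)" if "j < N" for j
    proof (rule less.hyps)
      show "(\<Sum>k<N. (a'(j := Suc (a' j))) k) < (\<Sum>k<N. a k)"
        using sum_exp_upd[OF that, of a' "Suc (a' j)"] deg i(2) by linarith
      show "a'(j := Suc (a' j)) \<in> exps N" using that less.prems by (simp add: exps_def a'_def)
    qed
    show ?thesis
    proof (rule in_span_cong)
      show "in_span (\<lambda>q J. \<Sum>j<N. poly (p i j) J * mon_eval N (a'(j := Suc (a' j))) q)"
        by (intro in_span_sum in_span_scale lower) auto
      fix q J assume "crit q J"
      have "mon_eval N a q = mon_eval N a' q * q i ^ 3" using mon_eval_add_exp[OF i(1)] a by metis
      also have "\<dots> = (\<Sum>j<N. poly (p i j) J * (mon_eval N a' q * q j))"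
        by (simp add: cube_eq[OF \<open>crit q J\<close> i(1)] sum_distrib_left mult_ac)
      also have "\<dots> = (\<Sum>j<N. poly (p i j) J * mon_eval N (a'(j := Suc (a' j))) q)"
        by (intro sum.cong refl) (simp add: mon_eval_Suc_exp)
      finally show "mon_eval N a q = (\<Sum>j<N. poly (p i j) J * mon_eval N (a'(j := Suc (a' j))) q)" .
    qed
  qed
qed

lemma multiplier_in_span:
  assumes f: "multiplier f" and "in_span h"
  shows "in_span (\<lambda>q J. f q J * h q J)"
proof -
  obtain c where c: "\<forall>q J. crit q J \<longrightarrow> h q J = (\<Sum>b\<in>reduced_exps N. poly (c b) J * mon_eval N b q)"
    using \<open>in_span h\<close> unfolding in_span_def by blast
  have "in_span (\<lambda>q J. \<Sum>b\<in>reduced_exps N. poly (c b) J * (f q J * mon_eval N b q))"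
    using f finite_reduced_exps
    by (intro in_span_sum in_span_scale) (auto simp: multiplier_def reduced_exps_def)
  then show ?thesis
    by (rule in_span_cong) (simp add: c sum_distrib_left mult_ac)
qed

lemma multiplier_poly: "multiplier (\<lambda>q J. poly c J)"
  unfolding multiplier_def
proof
  fix a assume "a \<in> exps N"
  then show "in_span (\<lambda>q J. poly c J * mon_eval N a q)" by (intro in_span_scale in_span_mon)
qed

lemma multiplier_var:
  assumes "k < N"
  shows "multiplier (\<lambda>q J. q k)"
  unfolding multiplier_def
proof
  fix a assume "a \<in> exps N"
  then have "in_span (\<lambda>q J. mon_eval N (a(k := Suc (a k))) q)"
    using assms by (intro in_span_mon) (auto simp: exps_def)
  then show "in_span (\<lambda>q J. q k * mon_eval N a q)"
    by (simp add: mon_eval_Suc_exp[OF assms] mult.commute)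
qed

lemma multiplier_add:
  assumes "multiplier f" "multiplier g"
  shows "multiplier (\<lambda>q J. f q J + g q J)"
  unfolding multiplier_def
proof
  fix a assume "a \<in> exps N"
  with assms have "in_span (\<lambda>q J. f q J * mon_eval N a q + g q J * mon_eval N a q)"
    unfolding multiplier_def by (intro in_span_add) auto
  then show "in_span (\<lambda>q J. (f q J + g q J) * mon_eval N a q)" by (simp add: distrib_right)
qed

lemma multiplier_mult:
  assumes f: "multiplier f" and g: "multiplier g"
  shows "multiplier (\<lambda>q J. f q J * g q J)"
  unfolding multiplier_def
proof
  fix a assume "a \<in> exps N"
  with g have "in_span (\<lambda>q J. g q J * mon_eval N a q)" unfolding multiplier_def by blast
  from multiplier_in_span[OF f this]
  show "in_span (\<lambda>q J. f q J * g q J * mon_eval N a q)" by (simp add: mult.assoc)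
qed

lemma multiplier_const: "multiplier (\<lambda>q J. c)"
  using multiplier_poly[of "[:c:]"] by simp

lemma multiplier_param: "multiplier (\<lambda>q J. J)"
  using multiplier_poly[of "[:0, 1:]"] by simp

lemma multiplier_diff:
  assumes "multiplier f" "multiplier g"
  shows "multiplier (\<lambda>q J. f q J - g q J)"
proof -
  have "multiplier (\<lambda>q J. f q J + (-1) * g q J)"
    using assms by (intro multiplier_add multiplier_mult multiplier_const)
  then show ?thesis by simp
qed

lemma multiplier_divide:
  assumes "multiplier f"
  shows "multiplier (\<lambda>q J. f q J / c)"
proof -
  have "multiplier (\<lambda>q J. f q J * (1 / c))"
    using assms by (intro multiplier_mult multiplier_const)
  then show ?thesis by simp
qed

lemma multiplier_power: "multiplier f \<Longrightarrow> multiplier (\<lambda>q J. f q J ^ n)"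
  by (induction n) (auto intro: multiplier_mult multiplier_const)

lemma multiplier_sum:
  "finite A \<Longrightarrow> (\<And>x. x \<in> A \<Longrightarrow> multiplier (f x)) \<Longrightarrow> multiplier (\<lambda>q J. \<Sum>x\<in>A. f x q J)"
  by (induction A rule: finite_induct) (auto intro: multiplier_add multiplier_const)

lemma multiplier_prod:
  "finite A \<Longrightarrow> (\<And>x. x \<in> A \<Longrightarrow> multiplier (f x)) \<Longrightarrow> multiplier (\<lambda>q J. \<Prod>x\<in>A. f x q J)"
  by (induction A rule: finite_induct) (auto intro: multiplier_mult multiplier_const)

lemma multiplier_det:
  assumes "\<And>i j. i < n \<Longrightarrow> j < n \<Longrightarrow> multiplier (A i j)"
  shows "multiplier (\<lambda>q J. det (mat n n (\<lambda>(i, j). A i j q J)))"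
proof -
  let ?P = "{\<pi>. \<pi> permutes {0..<n}}"
  have leibniz: "det (mat n n (\<lambda>(i, j). A i j q J))
      = (\<Sum>\<pi>\<in>?P. signof \<pi> * (\<Prod>i=0..<n. A i (\<pi> i) q J))" for q J
  proof -
    have "det (mat n n (\<lambda>(i, j). A i j q J))
        = (\<Sum>\<pi>\<in>?P. signof \<pi> * (\<Prod>i=0..<n. mat n n (\<lambda>(i, j). A i j q J) $$ (i, \<pi> i)))"
      by (rule det_def') simp
    also have "\<dots> = (\<Sum>\<pi>\<in>?P. signof \<pi> * (\<Prod>i=0..<n. A i (\<pi> i) q J))"
    proof (rule sum.cong[OF refl])
      fix \<pi> assume "\<pi> \<in> ?P"
      then have "\<pi> i < n" if "i < n" for i
        using permutes_in_image[of \<pi> "{0..<n}" i] that by simp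
      then show "signof \<pi> * (\<Prod>i=0..<n. mat n n (\<lambda>(i, j). A i j q J) $$ (i, \<pi> i))
          = signof \<pi> * (\<Prod>i=0..<n. A i (\<pi> i) q J)"
        by (auto intro!: prod.cong)
    qed
    finally show ?thesis .
  qed
  have entries: "multiplier (\<lambda>q J. A i (\<pi> i) q J)" if "\<pi> \<in> ?P" "i \<in> {0..<n}" for \<pi> i
    using assms permutes_in_image[of \<pi> "{0..<n}" i] that by simp
  have "multiplier (\<lambda>q J. \<Sum>\<pi>\<in>?P. signof \<pi> * (\<Prod>i=0..<n. A i (\<pi> i) q J))"
    by (rule multiplier_sum[OF finite_permutations[OF finite_atLeastLessThan]],
        rule multiplier_mult[OF multiplier_const], rule multiplier_prod[OF finite_atLeastLessThan],
        rule entries)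
  then show ?thesis by (simp only: leibniz)
qed

theorem finite_degenerate_params:
  assumes "multiplier D" and "r \<noteq> 0"
    and regular: "\<And>z. z \<in> {..<N} \<rightarrow>\<^sub>E {0, r, -r} \<Longrightarrow> crit z J0 \<and> D z J0 \<noteq> 0"
  shows "finite {J. \<exists>q. crit q J \<and> D q J = 0}"
proof -
  have "\<forall>a\<in>reduced_exps N. \<exists>c. \<forall>q J. crit q J \<longrightarrow>
      D q J * mon_eval N a q = (\<Sum>b\<in>reduced_exps N. poly (c b) J * mon_eval N b q)"
    using \<open>multiplier D\<close> unfolding multiplier_def in_span_def reduced_exps_def by blast
  from bchoice[OF this] obtain C where C: "\<forall>a\<in>reduced_exps N. \<forall>q J. crit q J \<longrightarrow>
      D q J * mon_eval N a q = (\<Sum>b\<in>reduced_exps N. poly (C a b) J * mon_eval N b q)"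
    by blast
  show ?thesis
  proof (rule finite_params_of_multiplication_matrix[OF finite_reduced_exps,
        where m = "mon_eval N" and C = C and b' = "\<lambda>_. 0" and G = "{..<N} \<rightarrow>\<^sub>E {0, r, -r}"
        and J' = J0])
    show "D q J * mon_eval N a q = (\<Sum>b\<in>reduced_exps N. poly (C a b) J * mon_eval N b q)"
      if "a \<in> reduced_exps N" "crit q J" for a q J
      using C that by blast
  qed (fact zero_in_reduced_exps mon_eval_zero_exp regular
        reduced_mons_separated_by_grid[OF \<open>r \<noteq> 0\<close>])+
qed

end

section \<open>The \<open>\<phi>\<^sup>4\<close> potential on the torus\<close>

definition kron :: "nat \<Rightarrow> nat \<Rightarrow> complex" where
  "kron k i = (if k = i then 1 else 0)"

lemma sum_kron:
  assumes "i < n"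
  shows "(\<Sum>k<n. kron k i * x k) = x i"
proof -
  have "(\<Sum>k<n. kron k i * x k) = (\<Sum>k<n. if k = i then x i else 0)"
    by (rule sum.cong) (auto simp: kron_def)
  then show ?thesis using assms by simp
qed

text \<open>Gradient and Hessian of \<open>V\<close>, written with Kronecker deltas so that each is a single
  sum over the sites, exactly as produced by differentiating \<open>V\<close> termwise.\<close>

definition grad_V :: "nat \<Rightarrow> complex \<Rightarrow> complex \<Rightarrow> complex \<Rightarrow> nat \<Rightarrow> (nat \<Rightarrow> complex) \<Rightarrow> complex" where
  "grad_V L J lam mu i q = (\<Sum>k<L^2. kron k i * (lam/6 * q k ^ 3 - mu^2 * q k)
      + J/2 * sum_list (map (\<lambda>j. (q k - q j) * (kron k i - kron j i)) (nbrs L k)))"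

definition hess_V :: "nat \<Rightarrow> complex \<Rightarrow> complex \<Rightarrow> complex \<Rightarrow> nat \<Rightarrow> nat \<Rightarrow> (nat \<Rightarrow> complex) \<Rightarrow> complex" where
  "hess_V L J lam mu i j q = (\<Sum>k<L^2. kron k j * kron k i * (lam/2 * q k ^ 2 - mu^2)
      + J/2 * sum_list (map (\<lambda>l. (kron k i - kron l i) * (kron k j - kron l j)) (nbrs L k)))"

definition coupling_grad :: "nat \<Rightarrow> nat \<Rightarrow> (nat \<Rightarrow> complex) \<Rightarrow> complex" where
  "coupling_grad L i q = (\<Sum>k<L^2. 1/2 * sum_list (map (\<lambda>j. (q k - q j) * (kron k i - kron j i)) (nbrs L k)))"

lemma has_field_derivative_upd: "((\<lambda>t. (q(i := t)) k) has_field_derivative kron k i) (at x)"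
  by (cases "k = i") (auto simp: kron_def)

lemma has_field_derivative_sum_list:
  assumes "\<And>j. j \<in> set xs \<Longrightarrow> (g j has_field_derivative g' j) (at x)"
  shows "((\<lambda>t. sum_list (map (\<lambda>j. g j t) xs)) has_field_derivative sum_list (map g' xs)) (at x)"
  using assms by (induction xs) (auto intro!: derivative_eq_intros)

lemma pderiv_at_V: "pderiv_at (V L J lam mu) i q = grad_V L J lam mu i q"
proof -
  have "((\<lambda>t. V L J lam mu (q(i := t))) has_field_derivative grad_V L J lam mu i (q(i := x))) (at x)" for x
    unfolding V_def grad_V_def
    apply (rule DERIV_sum)
    apply (rule derivative_eq_intros has_field_derivative_upd has_field_derivative_sum_list refl)+
    apply (simp add: sum_list_const_mult mult_ac)
    apply (simp add: field_simps)
    done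
  from this[of "q i"] show ?thesis unfolding pderiv_at_def by (simp add: DERIV_imp_deriv)
qed

lemma pderiv_at_grad_V: "pderiv_at (grad_V L J lam mu j) i q = hess_V L J lam mu i j q"
proof -
  have "((\<lambda>t. grad_V L J lam mu j (q(i := t))) has_field_derivative hess_V L J lam mu i j (q(i := x))) (at x)" for x
    unfolding hess_V_def grad_V_def
    apply (rule DERIV_sum)
    apply (rule derivative_eq_intros has_field_derivative_upd has_field_derivative_sum_list refl)+
    apply (simp add: sum_list_const_mult mult_ac)
    apply (simp add: field_simps)
    done
  from this[of "q i"] show ?thesis unfolding pderiv_at_def by (simp add: DERIV_imp_deriv)
qed

lemma pderiv_at_pderiv_at_V:
  "pderiv_at (pderiv_at (V L J lam mu) j) i q = hess_V L J lam mu i j q"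
  by (simp add: pderiv_at_V[abs_def] pderiv_at_grad_V)

lemma grad_V_eq:
  "i < L^2 \<Longrightarrow> grad_V L J lam mu i q = lam/6 * q i ^ 3 - mu^2 * q i + J * coupling_grad L i q"
  unfolding grad_V_def coupling_grad_def
  by (simp add: sum.distrib sum_kron sum_distrib_left)

lemma hess_V_0: "i < L^2 \<Longrightarrow> hess_V L 0 lam mu i j q = kron i j * (lam/2 * q i ^ 2 - mu^2)"
  unfolding hess_V_def using sum_kron[of i "L^2" "\<lambda>k. kron k j * (lam/2 * q k ^ 2 - mu^2)"]
  by (simp add: mult_ac)

lemma nbrs_less:
  assumes "1 \<le> L" "k < L^2" "j \<in> set (nbrs L k)"
  shows "j < L^2"
proof -
  have site: "a * L + c < L^2" if "a < L" "c < L" for a c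
  proof -
    have "(a + 1) * L \<le> L * L" using that by (intro mult_right_mono) auto
    then show ?thesis using that by (simp add: power2_eq_square algebra_simps)
  qed
  have "k div L < L" using assms by (simp add: power2_eq_square less_mult_imp_div_less)
  then show ?thesis using assms unfolding nbrs_def Let_def by (auto intro!: site)
qed

definition coord_linear :: "nat \<Rightarrow> ((nat \<Rightarrow> complex) \<Rightarrow> complex) \<Rightarrow> bool" where
  "coord_linear N f \<longleftrightarrow> (\<exists>w. \<forall>q. f q = (\<Sum>j<N. w j * q j))"

lemma coord_linear_eq:
  assumes "coord_linear N f"
  shows "f q = (\<Sum>j<N. f (\<lambda>k. kron k j) * q j)"
proof -
  obtain w where w: "\<And>q. f q = (\<Sum>j<N. w j * q j)"
    using assms unfolding coord_linear_def by blast
  have "f (\<lambda>k. kron k j) = w j" if "j < N" for j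
    using that by (simp add: w sum_kron[symmetric, of j N] kron_def mult.commute)
  then show ?thesis by (simp add: w)
qed

lemma coord_linear_var: "k < N \<Longrightarrow> coord_linear N (\<lambda>q. q k)"
  unfolding coord_linear_def by (rule exI[of _ "\<lambda>j. kron j k"]) (simp add: sum_kron)

lemma coord_linear_zero: "coord_linear N (\<lambda>q. 0)"
  unfolding coord_linear_def by (rule exI[of _ "\<lambda>_. 0"]) simp

lemma coord_linear_add:
  assumes "coord_linear N f" "coord_linear N g"
  shows "coord_linear N (\<lambda>q. f q + g q)"
proof -
  obtain v w where "\<And>q. f q = (\<Sum>j<N. v j * q j)" "\<And>q. g q = (\<Sum>j<N. w j * q j)"
    using assms unfolding coord_linear_def by metis
  then show ?thesis unfolding coord_linear_def
    by (intro exI[of _ "\<lambda>j. v j + w j"]) (simp add: sum.distrib distrib_right)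
qed

lemma coord_linear_scale:
  assumes "coord_linear N f"
  shows "coord_linear N (\<lambda>q. c * f q)"
proof -
  obtain w where "\<And>q. f q = (\<Sum>j<N. w j * q j)"
    using assms unfolding coord_linear_def by metis
  then show ?thesis unfolding coord_linear_def
    by (intro exI[of _ "\<lambda>j. c * w j"]) (simp add: sum_distrib_left mult.assoc)
qed

lemma coord_linear_sum_list:
  "(\<And>x. x \<in> set xs \<Longrightarrow> coord_linear N (f x)) \<Longrightarrow> coord_linear N (\<lambda>q. sum_list (map (\<lambda>x. f x q) xs))"
  by (induction xs) (auto intro: coord_linear_add coord_linear_zero)

lemma coord_linear_sum:
  "finite A \<Longrightarrow> (\<And>x. x \<in> A \<Longrightarrow> coord_linear N (f x)) \<Longrightarrow> coord_linear N (\<lambda>q. \<Sum>x\<in>A. f x q)"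
  by (induction A rule: finite_induct) (auto intro: coord_linear_add coord_linear_zero)

lemma coord_linear_coupling_grad:
  assumes "1 \<le> L"
  shows "coord_linear (L^2) (coupling_grad L i)"
proof -
  have "coord_linear (L^2) (\<lambda>q. \<Sum>k<L^2. 1/2 * sum_list (map (\<lambda>j.
      (kron k i - kron j i) * q k + (kron j i - kron k i) * q j) (nbrs L k)))"
    using nbrs_less[OF assms]
    by (intro coord_linear_sum coord_linear_scale coord_linear_sum_list coord_linear_add
        coord_linear_var) auto
  then show ?thesis unfolding coupling_grad_def[abs_def] by (simp add: algebra_simps)
qed

definition critical :: "nat \<Rightarrow> complex \<Rightarrow> complex \<Rightarrow> (nat \<Rightarrow> complex) \<Rightarrow> complex \<Rightarrow> bool" where
  "critical L lam mu q J \<longleftrightarrow> (\<forall>i<L^2. grad_V L J lam mu i q = 0)"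

definition hess_det :: "nat \<Rightarrow> complex \<Rightarrow> complex \<Rightarrow> (nat \<Rightarrow> complex) \<Rightarrow> complex \<Rightarrow> complex" where
  "hess_det L lam mu q J = det (mat (L^2) (L^2) (\<lambda>(i, j). hess_V L J lam mu i j q))"

lemma S_eq: "S L lam mu = {J. \<exists>q. critical L lam mu q J \<and> hess_det L lam mu q J = 0}"
  unfolding S_def critical_def hess_det_def by (simp add: pderiv_at_V pderiv_at_pderiv_at_V)

lemma sum_poly_linear:
  "(\<Sum>j<n. poly [:c * a j, d * g j:] J * q j) = c * (\<Sum>j<n. a j * q j) + d * J * (\<Sum>j<n. g j * q j)"
  by (simp add: sum.distrib sum_distrib_left algebra_simps)

locale phi4_lattice =
  fixes L :: nat and lam mu :: complex
  assumes L_pos: "1 \<le> L" and lam_nonzero: "lam \<noteq> 0" and mu_nonzero: "mu \<noteq> 0"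

sublocale phi4_lattice \<subseteq> cubic_relations "L^2" "critical L lam mu"
  "\<lambda>i j. [:6 * mu^2 / lam * kron j i, -6 / lam * coupling_grad L i (\<lambda>k. kron k j):]"
proof
  fix q J i assume crit: "critical L lam mu q J" and i: "i < L^2"
  let ?G = "\<Sum>j<L^2. coupling_grad L i (\<lambda>k. kron k j) * q j"
  have "lam/6 * q i ^ 3 - mu^2 * q i + J * ?G = 0"
    using crit i grad_V_eq[OF i] coord_linear_eq[OF coord_linear_coupling_grad[OF L_pos]]
    unfolding critical_def by metis
  then have "q i ^ 3 = 6 * mu^2 / lam * q i + (-6 / lam) * J * ?G"
    using lam_nonzero by (simp add: field_simps)
  also have "\<dots> = (\<Sum>j<L^2.
      poly [:6 * mu^2 / lam * kron j i, -6 / lam * coupling_grad L i (\<lambda>k. kron k j):] J * q j)"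
    using sum_kron[OF i, of q] sum_poly_linear[of "6 * mu^2 / lam" "\<lambda>j. kron j i" "-6 / lam"]
    by simp
  finally show "q i ^ 3 = \<dots>" .
qed

context phi4_lattice
begin

lemma multiplier_hess_det: "multiplier (hess_det L lam mu)"
proof -
  have "multiplier (\<lambda>q J. hess_V L J lam mu i j q)" for i j
    unfolding hess_V_def
    by (intro multiplier_sum multiplier_add multiplier_mult multiplier_const multiplier_param
        multiplier_diff multiplier_divide multiplier_power multiplier_var) auto
  then show ?thesis unfolding hess_det_def[abs_def] by (intro multiplier_det)
qed

text \<open>At \<open>J = 0\<close> the sites decouple into the quartic double wells \<open>\<lambda>/4! t\<^sup>4 - \<mu>\<^sup>2/2 t\<^sup>2\<close>,
  whose critical points \<open>0, \<plusminus>r\<close> are all nondegenerate.\<close>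

lemma grid_critical_nondegenerate:
  assumes r: "r^2 = 6 * mu^2 / lam" and z: "z \<in> {..<L^2} \<rightarrow>\<^sub>E {0, r, -r}"
  shows "critical L lam mu z 0 \<and> hess_det L lam mu z 0 \<noteq> 0"
proof
  have lr: "lam/6 * r^2 = mu^2" using r lam_nonzero by simp
  have sq: "z i ^ 2 = 0 \<or> z i ^ 2 = r^2" if "i < L^2" for i
  proof -
    have "z i \<in> {0, r, -r}" using z that by (simp add: PiE_iff)
    then show ?thesis by auto
  qed
  show "critical L lam mu z 0"
    unfolding critical_def
  proof (intro allI impI)
    fix i assume i: "i < L^2"
    have "grad_V L 0 lam mu i z = z i * (lam/6 * z i ^ 2 - mu^2)"
      by (simp add: grad_V_eq[OF i] power2_eq_square power3_eq_cube algebra_simps)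
    then show "grad_V L 0 lam mu i z = 0" using sq[OF i] lr by auto
  qed
  let ?H = "mat (L^2) (L^2) (\<lambda>(i, j). hess_V L 0 lam mu i j z)"
  have "upper_triangular ?H" unfolding upper_triangular_def by (auto simp: hess_V_0 kron_def)
  then have "hess_det L lam mu z 0 = prod_list (diag_mat ?H)"
    unfolding hess_det_def by (rule det_upper_triangular[where n = "L^2"]) simp
  also have "\<dots> = (\<Prod>i = 0..<L^2. lam/2 * z i ^ 2 - mu^2)"
    unfolding prod_list_diag_prod by (intro prod.cong refl) (auto simp: hess_V_0 kron_def)
  also have "\<dots> \<noteq> 0"
  proof -
    have "lam/2 * r^2 = 3 * mu^2" using lr by (simp add: field_simps)
    then have "lam/2 * z i ^ 2 - mu^2 \<noteq> 0" if "i < L^2" for i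
      using sq[OF that] mu_nonzero by auto
    then show ?thesis by simp
  qed
  finally show "hess_det L lam mu z 0 \<noteq> 0" .
qed

lemma finite_S: "finite (S L lam mu)"
proof -
  define r where "r = csqrt (6 * mu^2 / lam)"
  have r2: "r^2 = 6 * mu^2 / lam" by (simp add: r_def)
  then have "r \<noteq> 0" using lam_nonzero mu_nonzero by auto
  then show ?thesis
    unfolding S_eq
    by (rule finite_degenerate_params[OF multiplier_hess_det _ grid_critical_nondegenerate[OF r2]])
qed

end

theorem corollary1:
  fixes lam mu :: complex
  assumes "lam \<noteq> 0" and "mu \<noteq> 0"
  shows "countable (\<Union>L\<in>{2..}. S L lam mu)"
proof (rule countable_UN)
  fix L :: nat assume "L \<in> {2..}"
  then interpret phi4_lattice L lam mu by unfold_locales (use assms in auto)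
  show "countable (S L lam mu)" using finite_S by (rule countable_finite)
qed simp

end
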